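(* Fix $\alpha>0$, $\gamma\in(0,1)$, a constant $\bar\rho_i>0$, a finite nonempty multiset $D_{\rho_i}$ of samples $x=(s,a_i,\mathbf{a}_{-i},s')$ with $s,s'\in S$, and a distribution $p_0$ on $S$. For $\nu_i:S\to\mathbb{R}$ let $$\hat e_{\nu_i}(x)=r(s,a_i,\mathbf{a}_{-i})-\alpha\log\frac{\boldsymbol{\pi}_{-i}(\mathbf{a}_{-i}\mid s)}{\boldsymbol{\pi}^D_{-i}(\mathbf{a}_{-i}\mid s,a_i)}+\gamma\nu_i(s')-\nu_i(s),$$ $$L(\nu_i):=\bar\rho_i\,\alpha\,\hat{\mathbf{E}}_{x\in D_{\rho_i}}\Big[\exp\Big(\tfrac1\alpha\hat e_{\nu_i}(x)-1\Big)\Big]+(1-\gamma)\mathbb{E}_{s_0\sim p_0}[\nu_i(s_0)],$$ $$\tilde{\mathcal{L}}(\nu_i):=\alpha\log\Big(\bar\rho_i\,\hat{\mathbf{E}}_{x\in D_{\rho_i}}\Big[\exp\Big(\tfrac1\alpha\hat e_{\nu_i}(x)\Big)\Big]\Big)+(1-\gamma)\mathbb{E}_{s_0\sim p_0}[\nu_i(s_0)].$$ Let $V^*=\arg\min_{\nu_i}L(\nu_i)$ and $\tilde V^*=\arg\min_{\nu_i}\tilde{\mathcal{L}}(\nu_i)$ be the sets of minimizers. Then $L(\nu_i^* )=\tilde{\mathcal{L}}(\tilde\nu_i^* )$ for any $\nu_i^*\in V^*$ and $\tilde\nu_i^*\in\tilde V^*$. Also, for any $\nu_i^*\in V^*$ and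 any $C\in\mathbb{R}$, $\nu_i^*+C\in\tilde V^*$.
   Context: $\hat{\mathbf{E}}_{x\in D}[f(x)]:=\frac{1}{|D|}\sum_{x\in D}f(x)$ is the empirical average over a finite multiset $D$. $r$ is a real-valued reward; $\boldsymbol{\pi}_{-i}(\mathbf{a}_{-i}\mid s)$ and $\boldsymbol{\pi}^D_{-i}(\mathbf{a}_{-i}\mid s,a_i)$ are fixed conditional probability distributions, positive on the samples of $D_{\rho_i}$. The minimizations range over all functions $\nu_i:S\to\mathbb{R}$. *)

theory Defs
  imports "HOL-Probability.Probability"
begin

definition emp_avg :: "'x multiset \<Rightarrow> ('x \<Rightarrow> real) \<Rightarrow> real" where
  "emp_avg D f = (\<Sum>x\<in>#D. f x) / real (size D)"

definition argmin_set :: "('x \<Rightarrow> real) \<Rightarrow> 'x set \<Rightarrow> 'x set" where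
  "argmin_set F A = {x \<in> A. \<forall>y\<in>A. F x \<le> F y}"

definition e_hat ::
  "real \<Rightarrow> real \<Rightarrow> ('s \<Rightarrow> 'a \<Rightarrow> 'b \<Rightarrow> real) \<Rightarrow> ('s \<Rightarrow> 'b pmf) \<Rightarrow> ('s \<Rightarrow> 'a \<Rightarrow> 'b pmf)
   \<Rightarrow> ('s \<Rightarrow> real) \<Rightarrow> 's \<times> 'a \<times> 'b \<times> 's \<Rightarrow> real" where
  "e_hat \<alpha> \<gamma> r pim piD \<nu> x = (case x of (s, ai, am, s') \<Rightarrow>
     r s ai am - \<alpha> * ln (pmf (pim s) am / pmf (piD s ai) am) + \<gamma> * \<nu> s' - \<nu> s)"

definition L_obj ::
  "real \<Rightarrow> real \<Rightarrow> real \<Rightarrow> ('s \<times> 'a \<times> 'b \<times> 's) multiset \<Rightarrow> 's pmf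
   \<Rightarrow> ('s \<Rightarrow> 'a \<Rightarrow> 'b \<Rightarrow> real) \<Rightarrow> ('s \<Rightarrow> 'b pmf) \<Rightarrow> ('s \<Rightarrow> 'a \<Rightarrow> 'b pmf)
   \<Rightarrow> ('s \<Rightarrow> real) \<Rightarrow> real" where
  "L_obj \<alpha> \<gamma> \<rho> D p0 r pim piD \<nu> =
     \<rho> * \<alpha> * emp_avg D (\<lambda>x. exp (e_hat \<alpha> \<gamma> r pim piD \<nu> x / \<alpha> - 1))
     + (1 - \<gamma>) * measure_pmf.expectation p0 \<nu>"

definition Ltilde_obj ::
  "real \<Rightarrow> real \<Rightarrow> real \<Rightarrow> ('s \<times> 'a \<times> 'b \<times> 's) multiset \<Rightarrow> 's pmf
   \<Rightarrow> ('s \<Rightarrow> 'a \<Rightarrow> 'b \<Rightarrow> real) \<Rightarrow> ('s \<Rightarrow> 'b pmf) \<Rightarrow> ('s \<Rightarrow> 'a \<Rightarrow> 'b pmf)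
   \<Rightarrow> ('s \<Rightarrow> real) \<Rightarrow> real" where
  "Ltilde_obj \<alpha> \<gamma> \<rho> D p0 r pim piD \<nu> =
     \<alpha> * ln (\<rho> * emp_avg D (\<lambda>x. exp (e_hat \<alpha> \<gamma> r pim piD \<nu> x / \<alpha>)))
     + (1 - \<gamma>) * measure_pmf.expectation p0 \<nu>"

end

theory Submission
  imports Defs
begin

text \<open>
  Write \<open>Z \<nu>\<close> for \<open>\<rho>\<close> times the empirical mean of \<open>exp (e_hat \<nu> x / \<alpha>)\<close> and
  \<open>E \<nu>\<close> for the \<open>p\<^sub>0\<close>-mean of \<open>\<nu>\<close>. Then \<open>L \<nu> = \<alpha> Z \<nu> / e + (1 - \<gamma>) E \<nu>\<close> and
  \<open>L\<^sup>~ \<nu> = \<alpha> ln (Z \<nu>) + (1 - \<gamma>) E \<nu>\<close>, so \<open>L\<^sup>~ \<le> L\<close> by \<open>ln z \<le> z / e\<close>.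
  Adding a constant \<open>C\<close> to \<open>\<nu>\<close> multiplies \<open>Z \<nu>\<close> by \<open>exp (-(1 - \<gamma>) C / \<alpha>)\<close> and
  adds \<open>C\<close> to \<open>E \<nu>\<close>: hence \<open>L\<^sup>~\<close> is shift invariant, and a suitable shift brings
  \<open>Z \<nu>\<close> to \<open>e\<close>, where \<open>L\<close> and \<open>L\<^sup>~\<close> agree. So \<open>L\<^sup>~\<close> is the lower envelope of \<open>L\<close>
  along shifts, and both claims follow from an abstract fact about minimizers.
\<close>

lemma argmin_set_eq_min_of_attained_lower_bound:
  assumes "\<And>x. x \<in> A \<Longrightarrow> G x \<le> F x"
    and "\<And>x. x \<in> A \<Longrightarrow> \<exists>y\<in>A. F y \<le> G x"
    and "x \<in> argmin_set F A" and "y \<in> argmin_set G A"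
  shows "F x = G y"
proof -
  obtain y' where "y' \<in> A" "F y' \<le> G y"
    using assms(2,4) unfolding argmin_set_def by blast
  then have "F x \<le> G y"
    using assms(3) unfolding argmin_set_def by fastforce
  moreover have "G y \<le> F x"
    using assms(1,3,4) unfolding argmin_set_def by fastforce
  ultimately show ?thesis by simp
qed

lemma argmin_set_subset_of_attained_lower_bound:
  assumes "\<And>x. x \<in> A \<Longrightarrow> G x \<le> F x"
    and "\<And>x. x \<in> A \<Longrightarrow> \<exists>y\<in>A. F y \<le> G x"
  shows "argmin_set F A \<subseteq> argmin_set G A"
proof
  fix x assume x: "x \<in> argmin_set F A"
  have "G x \<le> G z" if "z \<in> A" for z
  proof -
    obtain y where "y \<in> A" "F y \<le> G z" using assms(2) \<open>z \<in> A\<close> by blast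
    moreover have "G x \<le> F x" using assms(1) x unfolding argmin_set_def by blast
    ultimately show ?thesis using x unfolding argmin_set_def by fastforce
  qed
  then show "x \<in> argmin_set G A" using x unfolding argmin_set_def by blast
qed

lemma argmin_set_invariant:
  assumes "x \<in> argmin_set G A" and "f x \<in> A" and "G (f x) = G x"
  shows "f x \<in> argmin_set G A"
  using assms unfolding argmin_set_def by simp

lemma ln_le_mult_exp_minus_one:
  fixes z :: real
  assumes "0 < z"
  shows "ln z \<le> exp (-1) * z"
proof -
  have "ln (exp (-1) * z) \<le> exp (-1) * z - 1"
    using assms by (intro ln_le_minus_one) simp
  then show ?thesis using assms by (simp add: ln_mult)
qed

lemma sum_mset_pos:
  fixes f :: "'x \<Rightarrow> 'b :: ordered_comm_monoid_add"
  assumes "M \<noteq> {#}" and "\<And>x. x \<in># M \<Longrightarrow> 0 < f x"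
  shows "0 < (\<Sum>x\<in>#M. f x)"
  using assms
proof (induction M)
  case empty
  then show ?case by simp
next
  case (add x M)
  then show ?case
    by (cases "M = {#}") (simp_all add: add_pos_pos)
qed

lemma emp_avg_pos:
  assumes "D \<noteq> {#}" and "\<And>x. x \<in># D \<Longrightarrow> 0 < f x"
  shows "0 < emp_avg D f"
  using sum_mset_pos[OF assms] assms(1) unfolding emp_avg_def by (simp add: nonempty_has_size)

lemma emp_avg_cmult: "emp_avg D (\<lambda>x. c * f x) = c * emp_avg D f"
  unfolding emp_avg_def by (simp add: sum_mset_distrib_left)

lemma e_hat_shift:
  "e_hat \<alpha> \<gamma> r pim piD (\<lambda>s. \<nu> s + C) x = e_hat \<alpha> \<gamma> r pim piD \<nu> x - (1 - \<gamma>) * C"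
  unfolding e_hat_def by (cases x) (simp add: algebra_simps)

lemma pmf_expectation_add_const:
  fixes \<nu> :: "'s \<Rightarrow> real"
  assumes "integrable (measure_pmf p) \<nu>"
  shows "measure_pmf.expectation p (\<lambda>s. \<nu> s + C) = measure_pmf.expectation p \<nu> + C"
  using assms by (simp add: measure_pmf.prob_space)

definition exp_residual_mass ::
  "real \<Rightarrow> real \<Rightarrow> real \<Rightarrow> ('s \<times> 'a \<times> 'b \<times> 's) multiset
   \<Rightarrow> ('s \<Rightarrow> 'a \<Rightarrow> 'b \<Rightarrow> real) \<Rightarrow> ('s \<Rightarrow> 'b pmf) \<Rightarrow> ('s \<Rightarrow> 'a \<Rightarrow> 'b pmf)
   \<Rightarrow> ('s \<Rightarrow> real) \<Rightarrow> real" where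
  "exp_residual_mass \<alpha> \<gamma> \<rho> D r pim piD \<nu> =
     \<rho> * emp_avg D (\<lambda>x. exp (e_hat \<alpha> \<gamma> r pim piD \<nu> x / \<alpha>))"

lemma exp_residual_mass_pos:
  assumes "0 < \<rho>" and "D \<noteq> {#}"
  shows "0 < exp_residual_mass \<alpha> \<gamma> \<rho> D r pim piD \<nu>"
  unfolding exp_residual_mass_def using assms by (simp add: emp_avg_pos)

lemma exp_residual_mass_shift:
  "exp_residual_mass \<alpha> \<gamma> \<rho> D r pim piD (\<lambda>s. \<nu> s + C) =
     exp (- ((1 - \<gamma>) * C / \<alpha>)) * exp_residual_mass \<alpha> \<gamma> \<rho> D r pim piD \<nu>"
proof -
  have "exp (e_hat \<alpha> \<gamma> r pim piD (\<lambda>s. \<nu> s + C) x / \<alpha>) =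
          exp (- ((1 - \<gamma>) * C / \<alpha>)) * exp (e_hat \<alpha> \<gamma> r pim piD \<nu> x / \<alpha>)" for x
    by (simp add: e_hat_shift diff_divide_distrib flip: exp_add)
  then show ?thesis
    unfolding exp_residual_mass_def by (simp add: emp_avg_cmult)
qed

lemma L_obj_eq:
  "L_obj \<alpha> \<gamma> \<rho> D p0 r pim piD \<nu> =
     \<alpha> * exp (-1) * exp_residual_mass \<alpha> \<gamma> \<rho> D r pim piD \<nu>
     + (1 - \<gamma>) * measure_pmf.expectation p0 \<nu>"
proof -
  have "exp (e_hat \<alpha> \<gamma> r pim piD \<nu> x / \<alpha> - 1) =
          exp (-1) * exp (e_hat \<alpha> \<gamma> r pim piD \<nu> x / \<alpha>)" for x
    by (simp add: exp_diff exp_minus field_simps)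
  then show ?thesis
    unfolding L_obj_def exp_residual_mass_def by (simp add: emp_avg_cmult)
qed

lemma Ltilde_obj_eq:
  "Ltilde_obj \<alpha> \<gamma> \<rho> D p0 r pim piD \<nu> =
     \<alpha> * ln (exp_residual_mass \<alpha> \<gamma> \<rho> D r pim piD \<nu>)
     + (1 - \<gamma>) * measure_pmf.expectation p0 \<nu>"
  unfolding Ltilde_obj_def exp_residual_mass_def ..

lemma Ltilde_obj_le_L_obj:
  assumes "0 < \<alpha>" and "0 < \<rho>" and "D \<noteq> {#}"
  shows "Ltilde_obj \<alpha> \<gamma> \<rho> D p0 r pim piD \<nu> \<le> L_obj \<alpha> \<gamma> \<rho> D p0 r pim piD \<nu>"
  using ln_le_mult_exp_minus_one[OF exp_residual_mass_pos[OF assms(2,3)]] assms(1)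
  unfolding L_obj_eq Ltilde_obj_eq by simp

lemma Ltilde_obj_shift:
  assumes "0 < \<alpha>" and "0 < \<rho>" and "D \<noteq> {#}"
    and "integrable (measure_pmf p0) \<nu>"
  shows "Ltilde_obj \<alpha> \<gamma> \<rho> D p0 r pim piD (\<lambda>s. \<nu> s + C) = Ltilde_obj \<alpha> \<gamma> \<rho> D p0 r pim piD \<nu>"
  using exp_residual_mass_pos[OF assms(2,3), of \<alpha> \<gamma> r pim piD \<nu>] assms(1)
  unfolding Ltilde_obj_eq exp_residual_mass_shift pmf_expectation_add_const[OF assms(4)]
  by (simp add: ln_mult field_simps)

lemma L_obj_shift_eq_Ltilde_obj:
  assumes "0 < \<alpha>" and "\<gamma> < 1" and "0 < \<rho>" and "D \<noteq> {#}"
    and "integrable (measure_pmf p0) \<nu>"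
  shows "\<exists>C. L_obj \<alpha> \<gamma> \<rho> D p0 r pim piD (\<lambda>s. \<nu> s + C) = Ltilde_obj \<alpha> \<gamma> \<rho> D p0 r pim piD \<nu>"
proof
  let ?Z = "exp_residual_mass \<alpha> \<gamma> \<rho> D r pim piD \<nu>"
  define C where "C = \<alpha> * (ln ?Z - 1) / (1 - \<gamma>)"
  have C: "(1 - \<gamma>) * C = \<alpha> * (ln ?Z - 1)"
    unfolding C_def using assms(2) by simp
  have "(1 - \<gamma>) * C / \<alpha> = ln ?Z - 1"
    using assms(1) by (simp add: C)
  then have unit: "exp (-1) * exp (- ((1 - \<gamma>) * C / \<alpha>)) * ?Z = 1"
    using exp_residual_mass_pos[OF assms(3,4), of \<alpha> \<gamma> r pim piD \<nu>]
    by (simp add: exp_diff exp_minus)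
  have "L_obj \<alpha> \<gamma> \<rho> D p0 r pim piD (\<lambda>s. \<nu> s + C) =
          \<alpha> * (exp (-1) * exp (- ((1 - \<gamma>) * C / \<alpha>)) * ?Z)
          + (1 - \<gamma>) * measure_pmf.expectation p0 \<nu> + (1 - \<gamma>) * C"
    unfolding L_obj_eq exp_residual_mass_shift pmf_expectation_add_const[OF assms(5)]
    by (simp add: algebra_simps)
  also have "\<dots> = Ltilde_obj \<alpha> \<gamma> \<rho> D p0 r pim piD \<nu>"
    unfolding unit unfolding C Ltilde_obj_eq by (simp add: algebra_simps)
  finally show "L_obj \<alpha> \<gamma> \<rho> D p0 r pim piD (\<lambda>s. \<nu> s + C) = Ltilde_obj \<alpha> \<gamma> \<rho> D p0 r pim piD \<nu>" .
qed

lemma ex_L_obj_le_Ltilde_obj: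
  assumes "0 < \<alpha>" and "\<gamma> < 1" and "0 < \<rho>" and "D \<noteq> {#}"
    and "\<nu> \<in> {\<nu>. integrable (measure_pmf p0) \<nu>}"
  shows "\<exists>\<mu>\<in>{\<mu>. integrable (measure_pmf p0) \<mu>}.
           L_obj \<alpha> \<gamma> \<rho> D p0 r pim piD \<mu> \<le> Ltilde_obj \<alpha> \<gamma> \<rho> D p0 r pim piD \<nu>"
proof -
  obtain C where "L_obj \<alpha> \<gamma> \<rho> D p0 r pim piD (\<lambda>s. \<nu> s + C) = Ltilde_obj \<alpha> \<gamma> \<rho> D p0 r pim piD \<nu>"
    using L_obj_shift_eq_Ltilde_obj[OF assms(1-4)] assms(5) by blast
  moreover have "integrable (measure_pmf p0) (\<lambda>s. \<nu> s + C)"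
    using assms(5) by simp
  ultimately show ?thesis by (intro bexI) simp_all
qed

lemma argmin_set_Ltilde_obj_shift:
  assumes "0 < \<alpha>" and "0 < \<rho>" and "D \<noteq> {#}"
    and "\<nu> \<in> argmin_set (Ltilde_obj \<alpha> \<gamma> \<rho> D p0 r pim piD) {\<nu>. integrable (measure_pmf p0) \<nu>}"
  shows "(\<lambda>s. \<nu> s + C) \<in> argmin_set (Ltilde_obj \<alpha> \<gamma> \<rho> D p0 r pim piD) {\<nu>. integrable (measure_pmf p0) \<nu>}"
proof -
  have "integrable (measure_pmf p0) \<nu>"
    using assms(4) unfolding argmin_set_def by simp
  then show ?thesis
    using argmin_set_invariant[OF assms(4), of "\<lambda>\<nu> s. \<nu> s + C"] Ltilde_obj_shift[OF assms(1-3)]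
    by simp
qed

theorem proposition3:
  fixes \<alpha> \<gamma> \<rho> :: real
    and D :: "('s \<times> 'a \<times> 'b \<times> 's) multiset"
    and p0 :: "'s pmf"
    and r :: "'s \<Rightarrow> 'a \<Rightarrow> 'b \<Rightarrow> real"
    and pim :: "'s \<Rightarrow> 'b pmf"
    and piD :: "'s \<Rightarrow> 'a \<Rightarrow> 'b pmf"
  assumes "\<alpha> > 0" and "0 < \<gamma>" and "\<gamma> < 1" and "\<rho> > 0"
    and "D \<noteq> {#}"
    and "\<And>s ai am s'. (s, ai, am, s') \<in># D \<Longrightarrow> pmf (pim s) am > 0 \<and> pmf (piD s ai) am > 0"
  defines "Fs \<equiv> {\<nu> :: 's \<Rightarrow> real. integrable (measure_pmf p0) \<nu>}"
  defines "Vstar \<equiv> argmin_set (L_obj \<alpha> \<gamma> \<rho> D p0 r pim piD) Fs"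
    and "Vtstar \<equiv> argmin_set (Ltilde_obj \<alpha> \<gamma> \<rho> D p0 r pim piD) Fs"
  shows "(\<forall>\<nu>1\<in>Vstar. \<forall>\<nu>2\<in>Vtstar.
            L_obj \<alpha> \<gamma> \<rho> D p0 r pim piD \<nu>1 = Ltilde_obj \<alpha> \<gamma> \<rho> D p0 r pim piD \<nu>2)
       \<and> (\<forall>\<nu>\<in>Vstar. \<forall>C::real. (\<lambda>s. \<nu> s + C) \<in> Vtstar)"
proof -
  let ?L = "L_obj \<alpha> \<gamma> \<rho> D p0 r pim piD"
  let ?T = "Ltilde_obj \<alpha> \<gamma> \<rho> D p0 r pim piD"
  have le: "\<And>\<nu>. \<nu> \<in> Fs \<Longrightarrow> ?T \<nu> \<le> ?L \<nu>"
    using Ltilde_obj_le_L_obj[OF assms(1,4,5)] .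
  have attained: "\<And>\<nu>. \<nu> \<in> Fs \<Longrightarrow> \<exists>\<mu>\<in>Fs. ?L \<mu> \<le> ?T \<nu>"
    unfolding Fs_def using ex_L_obj_le_Ltilde_obj[OF assms(1,3,4,5)] .
  have "?L \<nu>1 = ?T \<nu>2" if "\<nu>1 \<in> Vstar" "\<nu>2 \<in> Vtstar" for \<nu>1 \<nu>2
    using argmin_set_eq_min_of_attained_lower_bound[OF le attained] that
    unfolding Vstar_def Vtstar_def by blast
  moreover have "(\<lambda>s. \<nu> s + C) \<in> Vtstar" if "\<nu> \<in> Vstar" for \<nu> C
    using argmin_set_subset_of_attained_lower_bound[OF le attained] that
      argmin_set_Ltilde_obj_shift[OF assms(1,4,5)]
    unfolding Vstar_def Vtstar_def Fs_def by blast
  ultimately show ?thesis by blast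
qed

end
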